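(* Let $M$ and $N$ be objects of an abelian category $\mathcal{A}$. (1) Assume that every direct summand of $M$ is isomorphic to a subobject of $N$. Then $N$ is strongly $M$-Rickart if and only if $N$ is $M$-Rickart and $M$ is weak duo. (2) Assume that every direct summand of $N$ is isomorphic to a factor object of $M$. Then $N$ is dual strongly $M$-Rickart if and only if $N$ is dual $M$-Rickart and $N$ is weak duo.
   Context: A morphism $f:X\to Y$ is a section if $f'f=1_X$ for some $f':Y\to X$, and a retraction if $ff'=1_Y$ for some $f':Y\to X$. A monomorphism $k:K\to M$ is fully invariant if for every $h:M\to M$ there is $\alpha:K\to K$ with $hk=k\alpha$; an epimorphism $c:M\to C$ is fully coinvariant if for every $h:M\to M$ there is $\gamma:C\to C$ with $ch=\gamma c$. For objects $M,N$ of an abelian category: $N$ is $M$-Rickart if the kernel ${\rm ker}(f):{\rm Ker}(f)\to M$ of every morphism $f:M\to N$ is a section; $N$ is dual $M$-Rickart if the cokernel ${\rm coker}(f):N\to{\rm Coker}(f)$ of every morphism $f:M\to N$ is a retraction (equivalently the image ${\rm im}(f)$ is a section); $N$ is strongly $M$-Rickart if the kernel of every morphism $f:M\to N$ is a fully invariant section; $N$ is dual strongly $M$-Rickart if the cokernel of every morphism $f:M\to N$ is a fully coinvariant retraction (equivalently the image of every $f:M\to N$ is a fully invariant section). An object $M$ is weak duo if every section $K\to M$ is fully invariant (equivalently, every retraction $M\to C$ is fully coinvariant). *)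

theory Defs
  imports Main
begin

text \<open>A category is given by a set of objects, a set of arrows, domain and codomain maps,
  composition (comp g f = g after f) and identities; the preadditive structure is
  given by an addition on each hom-set and zero morphisms.\<close>

record ('o, 'm) cat =
  Obj  :: "'o set"
  Arr  :: "'m set"
  dom  :: "'m \<Rightarrow> 'o"
  cod  :: "'m \<Rightarrow> 'o"
  comp :: "'m \<Rightarrow> 'm \<Rightarrow> 'm"
  idm  :: "'o \<Rightarrow> 'm"
  add  :: "'m \<Rightarrow> 'm \<Rightarrow> 'm"
  zero :: "'o \<Rightarrow> 'o \<Rightarrow> 'm"

definition hom :: "('o, 'm) cat \<Rightarrow> 'o \<Rightarrow> 'o \<Rightarrow> 'm set" where
  "hom C A B = {f \<in> Arr C. dom C f = A \<and> cod C f = B}"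

definition category :: "('o, 'm) cat \<Rightarrow> bool" where
  "category C \<longleftrightarrow>
     (\<forall>f \<in> Arr C. dom C f \<in> Obj C \<and> cod C f \<in> Obj C) \<and>
     (\<forall>A \<in> Obj C. idm C A \<in> hom C A A) \<and>
     (\<forall>A \<in> Obj C. \<forall>B \<in> Obj C. \<forall>D \<in> Obj C. \<forall>f \<in> hom C A B. \<forall>g \<in> hom C B D.
        comp C g f \<in> hom C A D) \<and>
     (\<forall>f \<in> Arr C. \<forall>g \<in> Arr C. \<forall>h \<in> Arr C.
        cod C f = dom C g \<longrightarrow> cod C g = dom C h \<longrightarrow>
        comp C h (comp C g f) = comp C (comp C h g) f) \<and>
     (\<forall>f \<in> Arr C. comp C f (idm C (dom C f)) = f \<and> comp C (idm C (cod C f)) f = f)"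

definition preadditive :: "('o, 'm) cat \<Rightarrow> bool" where
  "preadditive C \<longleftrightarrow> category C \<and>
     (\<forall>A \<in> Obj C. \<forall>B \<in> Obj C.
        zero C A B \<in> hom C A B \<and>
        (\<forall>f \<in> hom C A B. \<forall>g \<in> hom C A B. add C f g \<in> hom C A B) \<and>
        (\<forall>f \<in> hom C A B. \<forall>g \<in> hom C A B. \<forall>h \<in> hom C A B.
           add C (add C f g) h = add C f (add C g h)) \<and>
        (\<forall>f \<in> hom C A B. \<forall>g \<in> hom C A B. add C f g = add C g f) \<and>
        (\<forall>f \<in> hom C A B. add C f (zero C A B) = f) \<and>
        (\<forall>f \<in> hom C A B. \<exists>g \<in> hom C A B. add C f g = zero C A B)) \<and>
     (\<forall>A \<in> Obj C. \<forall>B \<in> Obj C. \<forall>D \<in> Obj C.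
        \<forall>f \<in> hom C A B. \<forall>g \<in> hom C B D. \<forall>g' \<in> hom C B D.
          comp C (add C g g') f = add C (comp C g f) (comp C g' f)) \<and>
     (\<forall>A \<in> Obj C. \<forall>B \<in> Obj C. \<forall>D \<in> Obj C.
        \<forall>f \<in> hom C A B. \<forall>f' \<in> hom C A B. \<forall>g \<in> hom C B D.
          comp C g (add C f f') = add C (comp C g f) (comp C g f'))"

definition mono :: "('o, 'm) cat \<Rightarrow> 'm \<Rightarrow> bool" where
  "mono C m \<longleftrightarrow> m \<in> Arr C \<and>
     (\<forall>g \<in> Arr C. \<forall>h \<in> Arr C. cod C g = dom C m \<longrightarrow> cod C h = dom C m \<longrightarrow>
        dom C g = dom C h \<longrightarrow> comp C m g = comp C m h \<longrightarrow> g = h)"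

definition epi :: "('o, 'm) cat \<Rightarrow> 'm \<Rightarrow> bool" where
  "epi C e \<longleftrightarrow> e \<in> Arr C \<and>
     (\<forall>g \<in> Arr C. \<forall>h \<in> Arr C. dom C g = cod C e \<longrightarrow> dom C h = cod C e \<longrightarrow>
        cod C g = cod C h \<longrightarrow> comp C g e = comp C h e \<longrightarrow> g = h)"

definition iso :: "('o, 'm) cat \<Rightarrow> 'm \<Rightarrow> bool" where
  "iso C f \<longleftrightarrow> f \<in> Arr C \<and> (\<exists>g \<in> hom C (cod C f) (dom C f).
     comp C g f = idm C (dom C f) \<and> comp C f g = idm C (cod C f))"

definition is_kernel :: "('o, 'm) cat \<Rightarrow> 'm \<Rightarrow> 'm \<Rightarrow> bool" where
  "is_kernel C f k \<longleftrightarrow> f \<in> Arr C \<and> k \<in> Arr C \<and> cod C k = dom C f \<and>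
     comp C f k = zero C (dom C k) (cod C f) \<and>
     (\<forall>g \<in> Arr C. cod C g = dom C f \<longrightarrow> comp C f g = zero C (dom C g) (cod C f) \<longrightarrow>
        (\<exists>!h. h \<in> hom C (dom C g) (dom C k) \<and> comp C k h = g))"

definition is_cokernel :: "('o, 'm) cat \<Rightarrow> 'm \<Rightarrow> 'm \<Rightarrow> bool" where
  "is_cokernel C f c \<longleftrightarrow> f \<in> Arr C \<and> c \<in> Arr C \<and> dom C c = cod C f \<and>
     comp C c f = zero C (dom C f) (cod C c) \<and>
     (\<forall>g \<in> Arr C. dom C g = cod C f \<longrightarrow> comp C g f = zero C (dom C f) (cod C g) \<longrightarrow>
        (\<exists>!h. h \<in> hom C (cod C c) (cod C g) \<and> comp C h c = g))"

definition abelian_category :: "('o, 'm) cat \<Rightarrow> bool" where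
  "abelian_category C \<longleftrightarrow> preadditive C \<and>
     (\<exists>Z \<in> Obj C. idm C Z = zero C Z Z) \<and>
     (\<forall>A \<in> Obj C. \<forall>B \<in> Obj C. \<exists>P \<in> Obj C. \<exists>i1 \<in> hom C A P. \<exists>i2 \<in> hom C B P.
        \<exists>p1 \<in> hom C P A. \<exists>p2 \<in> hom C P B.
          comp C p1 i1 = idm C A \<and> comp C p2 i2 = idm C B \<and>
          comp C p2 i1 = zero C A B \<and> comp C p1 i2 = zero C B A \<and>
          add C (comp C i1 p1) (comp C i2 p2) = idm C P) \<and>
     (\<forall>f \<in> Arr C. \<exists>k. is_kernel C f k) \<and>
     (\<forall>f \<in> Arr C. \<exists>c. is_cokernel C f c) \<and>
     (\<forall>m. mono C m \<longrightarrow> (\<exists>f. is_kernel C f m)) \<and>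
     (\<forall>e. epi C e \<longrightarrow> (\<exists>f. is_cokernel C f e))"

definition is_section :: "('o, 'm) cat \<Rightarrow> 'm \<Rightarrow> bool" where
  "is_section C f \<longleftrightarrow> f \<in> Arr C \<and> (\<exists>f' \<in> hom C (cod C f) (dom C f). comp C f' f = idm C (dom C f))"

definition is_retraction :: "('o, 'm) cat \<Rightarrow> 'm \<Rightarrow> bool" where
  "is_retraction C f \<longleftrightarrow> f \<in> Arr C \<and> (\<exists>f' \<in> hom C (cod C f) (dom C f). comp C f f' = idm C (cod C f))"

definition fully_invariant :: "('o, 'm) cat \<Rightarrow> 'm \<Rightarrow> bool" where
  "fully_invariant C k \<longleftrightarrow> mono C k \<and>
     (\<forall>h \<in> hom C (cod C k) (cod C k). \<exists>\<alpha> \<in> hom C (dom C k) (dom C k). comp C h k = comp C k \<alpha>)"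

definition fully_coinvariant :: "('o, 'm) cat \<Rightarrow> 'm \<Rightarrow> bool" where
  "fully_coinvariant C c \<longleftrightarrow> epi C c \<and>
     (\<forall>h \<in> hom C (dom C c) (dom C c). \<exists>\<gamma> \<in> hom C (cod C c) (cod C c). comp C c h = comp C \<gamma> c)"

definition Rickart :: "('o, 'm) cat \<Rightarrow> 'o \<Rightarrow> 'o \<Rightarrow> bool" where
  "Rickart C M N \<longleftrightarrow> (\<forall>f \<in> hom C M N. \<forall>k. is_kernel C f k \<longrightarrow> is_section C k)"

definition dual_Rickart :: "('o, 'm) cat \<Rightarrow> 'o \<Rightarrow> 'o \<Rightarrow> bool" where
  "dual_Rickart C M N \<longleftrightarrow> (\<forall>f \<in> hom C M N. \<forall>c. is_cokernel C f c \<longrightarrow> is_retraction C c)"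

definition strongly_Rickart :: "('o, 'm) cat \<Rightarrow> 'o \<Rightarrow> 'o \<Rightarrow> bool" where
  "strongly_Rickart C M N \<longleftrightarrow>
     (\<forall>f \<in> hom C M N. \<forall>k. is_kernel C f k \<longrightarrow> fully_invariant C k \<and> is_section C k)"

definition dual_strongly_Rickart :: "('o, 'm) cat \<Rightarrow> 'o \<Rightarrow> 'o \<Rightarrow> bool" where
  "dual_strongly_Rickart C M N \<longleftrightarrow>
     (\<forall>f \<in> hom C M N. \<forall>c. is_cokernel C f c \<longrightarrow> fully_coinvariant C c \<and> is_retraction C c)"

definition weak_duo :: "('o, 'm) cat \<Rightarrow> 'o \<Rightarrow> bool" where
  "weak_duo C M \<longleftrightarrow> (\<forall>s. s \<in> Arr C \<and> cod C s = M \<and> is_section C s \<longrightarrow> fully_invariant C s)"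

definition direct_summand :: "('o, 'm) cat \<Rightarrow> 'o \<Rightarrow> 'o \<Rightarrow> bool" where
  "direct_summand C K M \<longleftrightarrow> K \<in> Obj C \<and> (\<exists>s \<in> hom C K M. is_section C s)"

definition iso_to_subobject :: "('o, 'm) cat \<Rightarrow> 'o \<Rightarrow> 'o \<Rightarrow> bool" where
  "iso_to_subobject C K N \<longleftrightarrow>
     (\<exists>S \<in> Obj C. \<exists>\<phi> \<in> hom C K S. \<exists>m \<in> hom C S N. iso C \<phi> \<and> mono C m)"

definition iso_to_factor :: "('o, 'm) cat \<Rightarrow> 'o \<Rightarrow> 'o \<Rightarrow> bool" where
  "iso_to_factor C K M \<longleftrightarrow>
     (\<exists>Q \<in> Obj C. \<exists>\<phi> \<in> hom C K Q. \<exists>e \<in> hom C M Q. iso C \<phi> \<and> epi C e)"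

end

theory Submission
  imports Defs
begin

text \<open>In an abelian category every section \<open>s : K \<rightarrow> M\<close> with retraction \<open>s'\<close> completes
  to a biproduct decomposition \<open>M = K \<oplus> L\<close>, taking \<open>L\<close> to be the kernel of \<open>s'\<close>; then
  \<open>s\<close> is the kernel of the projection \<open>q : M \<rightarrow> L\<close> and \<open>q\<close> is the cokernel of \<open>s\<close>.
  Kernels are unchanged by postcomposing with a monomorphism and cokernels by precomposing
  with an epimorphism. So in (1), \<open>q\<close> followed by \<open>L \<cong> S \<rightarrow> N\<close> is a morphism \<open>M \<rightarrow> N\<close>
  with kernel \<open>s\<close>, which is therefore fully invariant; in (2), \<open>M \<rightarrow> Q \<cong> K\<close> followed by
  \<open>s\<close> is a morphism \<open>M \<rightarrow> N\<close> with cokernel \<open>q\<close>, which is therefore fully coinvariant,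
  and the kernel of a fully coinvariant epimorphism is fully invariant. Conversely, the
  cokernel of \<open>f : M \<rightarrow> N\<close>, being a retraction, is the cokernel of a section into \<open>N\<close>,
  and the cokernel of a fully invariant monomorphism is fully coinvariant.\<close>

locale is_category =
  fixes C :: "('o, 'm) cat"
  assumes category: "category C"
begin

abbreviation cat_comp :: "'m \<Rightarrow> 'm \<Rightarrow> 'm" (infixr "\<cdot>" 70)
  where "g \<cdot> f \<equiv> comp C g f"

lemma hom_obj: "f \<in> hom C A B \<Longrightarrow> A \<in> Obj C \<and> B \<in> Obj C"
  using category unfolding category_def hom_def by blast

lemma comp_in_hom: "f \<in> hom C A B \<Longrightarrow> g \<in> hom C B D \<Longrightarrow> g \<cdot> f \<in> hom C A D"
  using category hom_obj unfolding category_def by meson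

lemma comp_assoc:
  "f \<in> hom C A B \<Longrightarrow> g \<in> hom C B D \<Longrightarrow> h \<in> hom C D E \<Longrightarrow> h \<cdot> (g \<cdot> f) = (h \<cdot> g) \<cdot> f"
  using category unfolding category_def hom_def by simp

lemma id_in_hom: "A \<in> Obj C \<Longrightarrow> idm C A \<in> hom C A A"
  using category unfolding category_def by blast

lemma comp_id_right: "f \<in> hom C A B \<Longrightarrow> f \<cdot> idm C A = f"
  using category unfolding category_def hom_def by auto

lemma comp_id_left: "f \<in> hom C A B \<Longrightarrow> idm C B \<cdot> f = f"
  using category unfolding category_def hom_def by auto

lemma monoI:
  assumes "m \<in> hom C A B"
    and "\<And>X g h. g \<in> hom C X A \<Longrightarrow> h \<in> hom C X A \<Longrightarrow> m \<cdot> g = m \<cdot> h \<Longrightarrow> g = h"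
  shows "mono C m"
  using assms unfolding mono_def hom_def by auto

lemma mono_cancel:
  "mono C m \<Longrightarrow> m \<in> hom C A B \<Longrightarrow> g \<in> hom C X A \<Longrightarrow> h \<in> hom C X A \<Longrightarrow> m \<cdot> g = m \<cdot> h \<Longrightarrow> g = h"
  unfolding mono_def hom_def by auto

lemma epiI:
  assumes "e \<in> hom C A B"
    and "\<And>Y g h. g \<in> hom C B Y \<Longrightarrow> h \<in> hom C B Y \<Longrightarrow> g \<cdot> e = h \<cdot> e \<Longrightarrow> g = h"
  shows "epi C e"
  using assms unfolding epi_def hom_def by auto

lemma epi_cancel:
  "epi C e \<Longrightarrow> e \<in> hom C A B \<Longrightarrow> g \<in> hom C B Y \<Longrightarrow> h \<in> hom C B Y \<Longrightarrow> g \<cdot> e = h \<cdot> e \<Longrightarrow> g = h"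
  unfolding epi_def hom_def by auto

lemma is_section_iff:
  "s \<in> hom C K M \<Longrightarrow> is_section C s \<longleftrightarrow> (\<exists>s' \<in> hom C M K. s' \<cdot> s = idm C K)"
  unfolding is_section_def hom_def by auto

lemma is_retraction_iff:
  "c \<in> hom C M Q \<Longrightarrow> is_retraction C c \<longleftrightarrow> (\<exists>r \<in> hom C Q M. c \<cdot> r = idm C Q)"
  unfolding is_retraction_def hom_def by auto

lemma section_mono:
  assumes s: "s \<in> hom C K M" and s': "s' \<in> hom C M K" and inv: "s' \<cdot> s = idm C K"
  shows "mono C s"
proof (rule monoI[OF s])
  fix X g h assume g: "g \<in> hom C X K" and h: "h \<in> hom C X K" and eq: "s \<cdot> g = s \<cdot> h"
  have "g = (s' \<cdot> s) \<cdot> g" using inv comp_id_left[OF g] by simp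
  also have "\<dots> = (s' \<cdot> s) \<cdot> h" using eq comp_assoc[OF g s s'] comp_assoc[OF h s s'] by simp
  also have "\<dots> = h" using inv comp_id_left[OF h] by simp
  finally show "g = h" .
qed

lemma retraction_epi:
  assumes c: "c \<in> hom C M Q" and r: "r \<in> hom C Q M" and inv: "c \<cdot> r = idm C Q"
  shows "epi C c"
proof (rule epiI[OF c])
  fix Y g h assume g: "g \<in> hom C Q Y" and h: "h \<in> hom C Q Y" and eq: "g \<cdot> c = h \<cdot> c"
  have "g = g \<cdot> (c \<cdot> r)" using inv comp_id_right[OF g] by simp
  also have "\<dots> = h \<cdot> (c \<cdot> r)" using eq comp_assoc[OF r c g] comp_assoc[OF r c h] by simp
  also have "\<dots> = h" using inv comp_id_right[OF h] by simp
  finally show "g = h" .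
qed

lemma iso_inverse:
  "iso C \<phi> \<Longrightarrow> \<phi> \<in> hom C A B \<Longrightarrow> \<exists>\<psi> \<in> hom C B A. \<psi> \<cdot> \<phi> = idm C A \<and> \<phi> \<cdot> \<psi> = idm C B"
  unfolding iso_def hom_def by auto

end

locale is_preadditive =
  fixes C :: "('o, 'm) cat"
  assumes preadditive: "preadditive C"

sublocale is_preadditive \<subseteq> is_category
  using preadditive by unfold_locales (simp add: preadditive_def)

context is_preadditive
begin

abbreviation cat_add :: "'m \<Rightarrow> 'm \<Rightarrow> 'm" (infixl "\<oplus>" 65)
  where "f \<oplus> g \<equiv> add C f g"

lemma hom_abelian_group:
  "\<forall>A \<in> Obj C. \<forall>B \<in> Obj C. zero C A B \<in> hom C A B \<and>
    (\<forall>f \<in> hom C A B. \<forall>g \<in> hom C A B. f \<oplus> g \<in> hom C A B) \<and>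
    (\<forall>f \<in> hom C A B. \<forall>g \<in> hom C A B. \<forall>h \<in> hom C A B. (f \<oplus> g) \<oplus> h = f \<oplus> (g \<oplus> h)) \<and>
    (\<forall>f \<in> hom C A B. \<forall>g \<in> hom C A B. f \<oplus> g = g \<oplus> f) \<and>
    (\<forall>f \<in> hom C A B. f \<oplus> zero C A B = f) \<and>
    (\<forall>f \<in> hom C A B. \<exists>g \<in> hom C A B. f \<oplus> g = zero C A B)"
  using preadditive unfolding preadditive_def by (elim conjE)

lemma zero_in_hom: "A \<in> Obj C \<Longrightarrow> B \<in> Obj C \<Longrightarrow> zero C A B \<in> hom C A B"
  using hom_abelian_group by blast

lemma add_in_hom: "f \<in> hom C A B \<Longrightarrow> g \<in> hom C A B \<Longrightarrow> f \<oplus> g \<in> hom C A B"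
  using hom_abelian_group hom_obj by blast

lemma add_assoc:
  "f \<in> hom C A B \<Longrightarrow> g \<in> hom C A B \<Longrightarrow> h \<in> hom C A B \<Longrightarrow> (f \<oplus> g) \<oplus> h = f \<oplus> (g \<oplus> h)"
  using hom_abelian_group hom_obj by blast

lemma add_commute: "f \<in> hom C A B \<Longrightarrow> g \<in> hom C A B \<Longrightarrow> f \<oplus> g = g \<oplus> f"
  using hom_abelian_group hom_obj by blast

lemma add_zero_right: "f \<in> hom C A B \<Longrightarrow> f \<oplus> zero C A B = f"
  using hom_abelian_group hom_obj by blast

lemma add_zero_left: "f \<in> hom C A B \<Longrightarrow> zero C A B \<oplus> f = f"
  using add_commute add_zero_right hom_obj zero_in_hom by metis

lemma add_inverse_ex: "f \<in> hom C A B \<Longrightarrow> \<exists>g \<in> hom C A B. f \<oplus> g = zero C A B"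
  using hom_abelian_group hom_obj by blast

lemma comp_add_left:
  assumes "f \<in> hom C A B" and "g \<in> hom C B D" and "g' \<in> hom C B D"
  shows "(g \<oplus> g') \<cdot> f = g \<cdot> f \<oplus> g' \<cdot> f"
proof -
  have "\<forall>A \<in> Obj C. \<forall>B \<in> Obj C. \<forall>D \<in> Obj C. \<forall>f \<in> hom C A B. \<forall>g \<in> hom C B D.
      \<forall>g' \<in> hom C B D. (g \<oplus> g') \<cdot> f = g \<cdot> f \<oplus> g' \<cdot> f"
    using preadditive unfolding preadditive_def by (elim conjE)
  then show ?thesis using assms hom_obj by meson
qed

lemma comp_add_right:
  assumes "f \<in> hom C A B" and "f' \<in> hom C A B" and "g \<in> hom C B D"
  shows "g \<cdot> (f \<oplus> f') = g \<cdot> f \<oplus> g \<cdot> f'"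
proof -
  have "\<forall>A \<in> Obj C. \<forall>B \<in> Obj C. \<forall>D \<in> Obj C. \<forall>f \<in> hom C A B. \<forall>f' \<in> hom C A B.
      \<forall>g \<in> hom C B D. g \<cdot> (f \<oplus> f') = g \<cdot> f \<oplus> g \<cdot> f'"
    using preadditive unfolding preadditive_def by (elim conjE)
  then show ?thesis using assms hom_obj by meson
qed

lemma add_left_eq_self_imp_zero:
  assumes x: "x \<in> hom C A B" and y: "y \<in> hom C A B" and "x \<oplus> y = y"
  shows "x = zero C A B"
proof -
  obtain u where u: "u \<in> hom C A B" "y \<oplus> u = zero C A B" using add_inverse_ex[OF y] by blast
  have "x = x \<oplus> (y \<oplus> u)" using u add_zero_right[OF x] by simp
  also have "\<dots> = zero C A B" using add_assoc[OF x y u(1)] assms(3) u(2) by simp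
  finally show ?thesis .
qed

lemma comp_zero_right:
  assumes g: "g \<in> hom C A B" and X: "X \<in> Obj C"
  shows "g \<cdot> zero C X A = zero C X B"
proof -
  have z: "zero C X A \<in> hom C X A" using zero_in_hom X hom_obj[OF g] by blast
  have "g \<cdot> zero C X A = g \<cdot> zero C X A \<oplus> g \<cdot> zero C X A"
    using comp_add_right[OF z z g] add_zero_right[OF z] by simp
  then show ?thesis using add_left_eq_self_imp_zero comp_in_hom[OF z g] by metis
qed

lemma comp_zero_left:
  assumes f: "f \<in> hom C A B" and D: "D \<in> Obj C"
  shows "zero C B D \<cdot> f = zero C A D"
proof -
  have z: "zero C B D \<in> hom C B D" using zero_in_hom D hom_obj[OF f] by blast
  have "zero C B D \<cdot> f = zero C B D \<cdot> f \<oplus> zero C B D \<cdot> f"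
    using comp_add_left[OF f z z] add_zero_right[OF z] by simp
  then show ?thesis using add_left_eq_self_imp_zero comp_in_hom[OF f z] by metis
qed

lemma is_kernel_hom:
  "is_kernel C f k \<Longrightarrow> f \<in> hom C A B \<Longrightarrow> k \<in> hom C (dom C k) A \<and> f \<cdot> k = zero C (dom C k) B"
  unfolding is_kernel_def hom_def by (elim conjE) simp

lemma is_kernel_factor:
  assumes "is_kernel C f k" and "f \<in> hom C A B" and "g \<in> hom C X A" and "f \<cdot> g = zero C X B"
  shows "\<exists>!h. h \<in> hom C X (dom C k) \<and> k \<cdot> h = g"
  using assms unfolding is_kernel_def hom_def by (elim conjE) (drule bspec[where x = g], simp_all)

lemma kernel_mono:
  assumes ker: "is_kernel C f k" and f: "f \<in> hom C A B"
  shows "mono C k"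
proof -
  have k: "k \<in> hom C (dom C k) A" and fk: "f \<cdot> k = zero C (dom C k) B"
    using is_kernel_hom[OF ker f] by auto
  show ?thesis
  proof (rule monoI[OF k])
    fix X g h assume g: "g \<in> hom C X (dom C k)" and h: "h \<in> hom C X (dom C k)" and eq: "k \<cdot> g = k \<cdot> h"
    have "f \<cdot> (k \<cdot> g) = zero C X B"
      using comp_assoc[OF g k f] fk comp_zero_left[OF g] hom_obj[OF f] by simp
    then have uniq: "\<exists>!u. u \<in> hom C X (dom C k) \<and> k \<cdot> u = k \<cdot> g"
      using is_kernel_factor[OF ker f comp_in_hom[OF g k]] by simp
    show "g = h" using the1_equality[OF uniq, of g] the1_equality[OF uniq, of h] g h eq by simp
  qed
qed

lemma is_kernelI:
  assumes f: "f \<in> hom C A B" and k: "k \<in> hom C K A" and "mono C k" and fk: "f \<cdot> k = zero C K B"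
    and factor: "\<And>X g. g \<in> hom C X A \<Longrightarrow> f \<cdot> g = zero C X B \<Longrightarrow> \<exists>h \<in> hom C X K. k \<cdot> h = g"
  shows "is_kernel C f k"
  unfolding is_kernel_def
proof (intro conjI ballI impI)
  fix g assume "g \<in> Arr C" "cod C g = dom C f" "f \<cdot> g = zero C (dom C g) (cod C f)"
  then have g: "g \<in> hom C (dom C g) A" and fg: "f \<cdot> g = zero C (dom C g) B"
    using f unfolding hom_def by auto
  obtain h where h: "h \<in> hom C (dom C g) K" "k \<cdot> h = g" using factor[OF g fg] by blast
  have K: "dom C k = K" using k unfolding hom_def by simp
  show "\<exists>!h. h \<in> hom C (dom C g) (dom C k) \<and> k \<cdot> h = g"
  proof (rule ex1I[of _ h])
    fix h' assume "h' \<in> hom C (dom C g) (dom C k) \<and> k \<cdot> h' = g"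
    then show "h' = h" using mono_cancel[OF \<open>mono C k\<close> k _ h(1)] h(2) K by auto
  qed (use h K in simp)
qed (use f k fk in \<open>auto simp: hom_def\<close>)

lemma is_cokernel_hom:
  "is_cokernel C f c \<Longrightarrow> f \<in> hom C A B \<Longrightarrow> c \<in> hom C B (cod C c) \<and> c \<cdot> f = zero C A (cod C c)"
  unfolding is_cokernel_def hom_def by (elim conjE) simp

lemma is_cokernel_factor:
  assumes "is_cokernel C f c" and "f \<in> hom C A B" and "g \<in> hom C B Y" and "g \<cdot> f = zero C A Y"
  shows "\<exists>!h. h \<in> hom C (cod C c) Y \<and> h \<cdot> c = g"
  using assms unfolding is_cokernel_def hom_def by (elim conjE) (drule bspec[where x = g], simp_all)

lemma cokernel_epi:
  assumes coker: "is_cokernel C f c" and f: "f \<in> hom C A B"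
  shows "epi C c"
proof -
  have c: "c \<in> hom C B (cod C c)" and cf: "c \<cdot> f = zero C A (cod C c)"
    using is_cokernel_hom[OF coker f] by auto
  show ?thesis
  proof (rule epiI[OF c])
    fix Y g h assume g: "g \<in> hom C (cod C c) Y" and h: "h \<in> hom C (cod C c) Y" and eq: "g \<cdot> c = h \<cdot> c"
    have "(g \<cdot> c) \<cdot> f = zero C A Y"
      using comp_assoc[OF f c g] cf comp_zero_right[OF g] hom_obj[OF f] by simp
    then have uniq: "\<exists>!u. u \<in> hom C (cod C c) Y \<and> u \<cdot> c = g \<cdot> c"
      using is_cokernel_factor[OF coker f comp_in_hom[OF c g]] by simp
    show "g = h" using the1_equality[OF uniq, of g] the1_equality[OF uniq, of h] g h eq by simp
  qed
qed

lemma is_cokernelI: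
  assumes f: "f \<in> hom C A B" and c: "c \<in> hom C B Q" and "epi C c" and cf: "c \<cdot> f = zero C A Q"
    and factor: "\<And>Y g. g \<in> hom C B Y \<Longrightarrow> g \<cdot> f = zero C A Y \<Longrightarrow> \<exists>h \<in> hom C Q Y. h \<cdot> c = g"
  shows "is_cokernel C f c"
  unfolding is_cokernel_def
proof (intro conjI ballI impI)
  fix g assume "g \<in> Arr C" "dom C g = cod C f" "g \<cdot> f = zero C (dom C f) (cod C g)"
  then have g: "g \<in> hom C B (cod C g)" and gf: "g \<cdot> f = zero C A (cod C g)"
    using f unfolding hom_def by auto
  obtain h where h: "h \<in> hom C Q (cod C g)" "h \<cdot> c = g" using factor[OF g gf] by blast
  have Q: "cod C c = Q" using c unfolding hom_def by simp
  show "\<exists>!h. h \<in> hom C (cod C c) (cod C g) \<and> h \<cdot> c = g"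
  proof (rule ex1I[of _ h])
    fix h' assume "h' \<in> hom C (cod C c) (cod C g) \<and> h' \<cdot> c = g"
    then show "h' = h" using epi_cancel[OF \<open>epi C c\<close> c _ h(1)] h(2) Q by auto
  qed (use h Q in simp)
qed (use f c cf in \<open>auto simp: hom_def\<close>)

lemma is_kernel_comp_mono:
  assumes ker: "is_kernel C f k" and f: "f \<in> hom C A B" and "mono C u" and u: "u \<in> hom C B D"
  shows "is_kernel C (u \<cdot> f) k"
proof -
  have k: "k \<in> hom C (dom C k) A" and fk: "f \<cdot> k = zero C (dom C k) B"
    using is_kernel_hom[OF ker f] by auto
  show ?thesis
  proof (rule is_kernelI[OF comp_in_hom[OF f u] k kernel_mono[OF ker f]])
    show "(u \<cdot> f) \<cdot> k = zero C (dom C k) D"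
      using comp_assoc[OF k f u] fk comp_zero_right[OF u] hom_obj[OF k] by simp
  next
    fix X g assume g: "g \<in> hom C X A" and ufg: "(u \<cdot> f) \<cdot> g = zero C X D"
    have X: "X \<in> Obj C" using hom_obj[OF g] by blast
    have "u \<cdot> (f \<cdot> g) = u \<cdot> zero C X B"
      using comp_assoc[OF g f u] ufg comp_zero_right[OF u X] by simp
    then have "f \<cdot> g = zero C X B"
      using mono_cancel[OF \<open>mono C u\<close> u comp_in_hom[OF g f]] zero_in_hom[OF X] hom_obj[OF f] by blast
    then show "\<exists>h \<in> hom C X (dom C k). k \<cdot> h = g"
      using ex1_implies_ex[OF is_kernel_factor[OF ker f g]] by blast
  qed
qed

lemma is_cokernel_comp_epi:
  assumes coker: "is_cokernel C f c" and f: "f \<in> hom C A B" and "epi C e" and e: "e \<in> hom C X A"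
  shows "is_cokernel C (f \<cdot> e) c"
proof -
  have c: "c \<in> hom C B (cod C c)" and cf: "c \<cdot> f = zero C A (cod C c)"
    using is_cokernel_hom[OF coker f] by auto
  show ?thesis
  proof (rule is_cokernelI[OF comp_in_hom[OF e f] c cokernel_epi[OF coker f]])
    show "c \<cdot> (f \<cdot> e) = zero C X (cod C c)"
      using comp_assoc[OF e f c] cf comp_zero_left[OF e] hom_obj[OF c] by simp
  next
    fix Y g assume g: "g \<in> hom C B Y" and gfe: "g \<cdot> (f \<cdot> e) = zero C X Y"
    have Y: "Y \<in> Obj C" using hom_obj[OF g] by blast
    have "(g \<cdot> f) \<cdot> e = zero C A Y \<cdot> e"
      using comp_assoc[OF e f g] gfe comp_zero_left[OF e Y] by simp
    then have "g \<cdot> f = zero C A Y"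
      using epi_cancel[OF \<open>epi C e\<close> e comp_in_hom[OF f g]] zero_in_hom[OF _ Y] hom_obj[OF f] by blast
    then show "\<exists>h \<in> hom C (cod C c) Y. h \<cdot> c = g"
      using ex1_implies_ex[OF is_cokernel_factor[OF coker f g]] by blast
  qed
qed

lemma fully_invariant_kernel_of_fully_coinvariant:
  assumes ker: "is_kernel C c k" and c: "c \<in> hom C M Q" and "fully_coinvariant C c"
  shows "fully_invariant C k"
  unfolding fully_invariant_def
proof (intro conjI ballI)
  show "mono C k" using kernel_mono[OF ker c] .
  have k: "k \<in> hom C (dom C k) M" and ck: "c \<cdot> k = zero C (dom C k) Q"
    using is_kernel_hom[OF ker c] by auto
  fix h assume "h \<in> hom C (cod C k) (cod C k)"
  then have h: "h \<in> hom C M M" using k unfolding hom_def by simp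
  obtain \<gamma> where \<gamma>: "\<gamma> \<in> hom C Q Q" and ch: "c \<cdot> h = \<gamma> \<cdot> c"
    using \<open>fully_coinvariant C c\<close> h c unfolding fully_coinvariant_def hom_def by auto
  have "c \<cdot> (h \<cdot> k) = \<gamma> \<cdot> (c \<cdot> k)"
    using comp_assoc[OF k h c] comp_assoc[OF k c \<gamma>] ch by simp
  also have "\<dots> = zero C (dom C k) Q" using ck comp_zero_right[OF \<gamma>] hom_obj[OF k] by simp
  finally show "\<exists>\<alpha> \<in> hom C (dom C k) (dom C k). h \<cdot> k = k \<cdot> \<alpha>"
    using ex1_implies_ex[OF is_kernel_factor[OF ker c comp_in_hom[OF k h]]] by metis
qed

lemma fully_coinvariant_cokernel_of_fully_invariant:
  assumes coker: "is_cokernel C k c" and k: "k \<in> hom C K M" and "fully_invariant C k"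
  shows "fully_coinvariant C c"
  unfolding fully_coinvariant_def
proof (intro conjI ballI)
  show "epi C c" using cokernel_epi[OF coker k] .
  have c: "c \<in> hom C M (cod C c)" and ck: "c \<cdot> k = zero C K (cod C c)"
    using is_cokernel_hom[OF coker k] by auto
  fix h assume "h \<in> hom C (dom C c) (dom C c)"
  then have h: "h \<in> hom C M M" using c unfolding hom_def by simp
  obtain \<alpha> where \<alpha>: "\<alpha> \<in> hom C K K" and hk: "h \<cdot> k = k \<cdot> \<alpha>"
    using \<open>fully_invariant C k\<close> h k unfolding fully_invariant_def hom_def by auto
  have "(c \<cdot> h) \<cdot> k = (c \<cdot> k) \<cdot> \<alpha>"
    using comp_assoc[OF k h c] comp_assoc[OF \<alpha> k c] hk by simp
  also have "\<dots> = zero C K (cod C c)" using ck comp_zero_left[OF \<alpha>] hom_obj[OF c] by simp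
  finally show "\<exists>\<gamma> \<in> hom C (cod C c) (cod C c). c \<cdot> h = \<gamma> \<cdot> c"
    using ex1_implies_ex[OF is_cokernel_factor[OF coker k comp_in_hom[OF h c]]] by metis
qed

definition biproduct :: "'o \<Rightarrow> 'o \<Rightarrow> 'o \<Rightarrow> 'm \<Rightarrow> 'm \<Rightarrow> 'm \<Rightarrow> 'm \<Rightarrow> bool" where
  "biproduct M K L i1 p1 i2 p2 \<longleftrightarrow>
     i1 \<in> hom C K M \<and> p1 \<in> hom C M K \<and> i2 \<in> hom C L M \<and> p2 \<in> hom C M L \<and>
     p1 \<cdot> i1 = idm C K \<and> p2 \<cdot> i2 = idm C L \<and> p2 \<cdot> i1 = zero C K L \<and> p1 \<cdot> i2 = zero C L K \<and>
     i1 \<cdot> p1 \<oplus> i2 \<cdot> p2 = idm C M"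

lemma biproduct_swap: "biproduct M K L i1 p1 i2 p2 \<Longrightarrow> biproduct M L K i2 p2 i1 p1"
  unfolding biproduct_def using add_commute comp_in_hom by metis

lemma biproduct_direct_summand: "biproduct M K L i1 p1 i2 p2 \<Longrightarrow> direct_summand C K M"
  unfolding biproduct_def direct_summand_def using is_section_iff hom_obj by blast

lemma biproduct_kernel:
  assumes "biproduct M K L i1 p1 i2 p2"
  shows "is_kernel C p2 i1"
proof -
  have i1: "i1 \<in> hom C K M" and p1: "p1 \<in> hom C M K" and i2: "i2 \<in> hom C L M"
    and p2: "p2 \<in> hom C M L" and p1i1: "p1 \<cdot> i1 = idm C K" and p2i1: "p2 \<cdot> i1 = zero C K L"
    and sum: "i1 \<cdot> p1 \<oplus> i2 \<cdot> p2 = idm C M"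
    using assms unfolding biproduct_def by auto
  show ?thesis
  proof (rule is_kernelI[OF p2 i1 section_mono[OF i1 p1 p1i1] p2i1])
    fix X g assume g: "g \<in> hom C X M" and p2g: "p2 \<cdot> g = zero C X L"
    have X: "X \<in> Obj C" using hom_obj[OF g] by blast
    have "g = (i1 \<cdot> p1 \<oplus> i2 \<cdot> p2) \<cdot> g" using sum comp_id_left[OF g] by simp
    also have "\<dots> = i1 \<cdot> (p1 \<cdot> g) \<oplus> i2 \<cdot> (p2 \<cdot> g)"
      using comp_add_left[OF g comp_in_hom[OF p1 i1] comp_in_hom[OF p2 i2]]
        comp_assoc[OF g p1 i1] comp_assoc[OF g p2 i2] by simp
    also have "\<dots> = i1 \<cdot> (p1 \<cdot> g)"
      using p2g comp_zero_right[OF i2 X] add_zero_right comp_in_hom[OF comp_in_hom[OF g p1] i1] by simp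
    finally show "\<exists>h \<in> hom C X K. i1 \<cdot> h = g" using comp_in_hom[OF g p1] by metis
  qed
qed

lemma biproduct_cokernel:
  assumes "biproduct M K L i1 p1 i2 p2"
  shows "is_cokernel C i1 p2"
proof -
  have i1: "i1 \<in> hom C K M" and p1: "p1 \<in> hom C M K" and i2: "i2 \<in> hom C L M"
    and p2: "p2 \<in> hom C M L" and p2i2: "p2 \<cdot> i2 = idm C L" and p2i1: "p2 \<cdot> i1 = zero C K L"
    and sum: "i1 \<cdot> p1 \<oplus> i2 \<cdot> p2 = idm C M"
    using assms unfolding biproduct_def by auto
  show ?thesis
  proof (rule is_cokernelI[OF i1 p2 retraction_epi[OF p2 i2 p2i2] p2i1])
    fix Y g assume g: "g \<in> hom C M Y" and gi1: "g \<cdot> i1 = zero C K Y"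
    have Y: "Y \<in> Obj C" using hom_obj[OF g] by blast
    have "g = g \<cdot> (i1 \<cdot> p1 \<oplus> i2 \<cdot> p2)" using sum comp_id_right[OF g] by simp
    also have "\<dots> = (g \<cdot> i1) \<cdot> p1 \<oplus> (g \<cdot> i2) \<cdot> p2"
      using comp_add_right[OF comp_in_hom[OF p1 i1] comp_in_hom[OF p2 i2] g]
        comp_assoc[OF p1 i1 g] comp_assoc[OF p2 i2 g] by simp
    also have "\<dots> = (g \<cdot> i2) \<cdot> p2"
      using gi1 comp_zero_left[OF p1 Y] add_zero_left comp_in_hom[OF p2 comp_in_hom[OF i2 g]] by simp
    finally show "\<exists>h \<in> hom C L Y. h \<cdot> p2 = g" using comp_in_hom[OF i2 g] by metis
  qed
qed

lemma exists_complement_of_endomorphism: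
  assumes e: "e \<in> hom C M M"
  shows "\<exists>t \<in> hom C M M. e \<oplus> t = idm C M"
proof -
  have 1: "idm C M \<in> hom C M M" using id_in_hom hom_obj[OF e] by blast
  obtain n where n: "n \<in> hom C M M" "e \<oplus> n = zero C M M" using add_inverse_ex[OF e] by blast
  have "e \<oplus> (n \<oplus> idm C M) = idm C M"
    using add_assoc[OF e n(1) 1, symmetric] n(2) add_zero_left[OF 1] by simp
  then show ?thesis using add_in_hom[OF n(1) 1] by blast
qed

lemma section_complementary_idempotent:
  assumes s: "s \<in> hom C K M" and s': "s' \<in> hom C M K" and inv: "s' \<cdot> s = idm C K"
  shows "\<exists>t \<in> hom C M M. s \<cdot> s' \<oplus> t = idm C M \<and> s' \<cdot> t = zero C M K \<and> t \<cdot> s = zero C K M"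
proof -
  have e: "s \<cdot> s' \<in> hom C M M" using comp_in_hom[OF s' s] .
  obtain t where t: "t \<in> hom C M M" and sum: "s \<cdot> s' \<oplus> t = idm C M"
    using exists_complement_of_endomorphism[OF e] by blast
  have "s' = s' \<cdot> (s \<cdot> s' \<oplus> t)" using sum comp_id_right[OF s'] by simp
  also have "\<dots> = s' \<oplus> s' \<cdot> t"
    using comp_add_right[OF e t s'] comp_assoc[OF s' s s'] inv comp_id_left[OF s'] by simp
  finally have "s' \<cdot> t = zero C M K"
    using add_left_eq_self_imp_zero comp_in_hom[OF t s'] s' add_commute by metis
  moreover have "s = (s \<cdot> s' \<oplus> t) \<cdot> s" using sum comp_id_left[OF s] by simp
  then have "s = s \<oplus> t \<cdot> s"
    using comp_add_left[OF s e t] comp_assoc[OF s s' s] inv comp_id_right[OF s] by simp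
  then have "t \<cdot> s = zero C K M"
    using add_left_eq_self_imp_zero comp_in_hom[OF s t] s add_commute by metis
  ultimately show ?thesis using t sum by blast
qed

end

locale is_abelian =
  fixes C :: "('o, 'm) cat"
  assumes abelian: "abelian_category C"

sublocale is_abelian \<subseteq> is_preadditive
  using abelian by unfold_locales (simp add: abelian_category_def)

context is_abelian
begin

lemma kernel_exists: "f \<in> Arr C \<Longrightarrow> \<exists>k. is_kernel C f k"
  using abelian unfolding abelian_category_def by blast

lemma section_complement:
  assumes s: "s \<in> hom C K M" and s': "s' \<in> hom C M K" and inv: "s' \<cdot> s = idm C K"
  shows "\<exists>L j q. biproduct M K L s s' j q"
proof -
  obtain t where t: "t \<in> hom C M M" and sum: "s \<cdot> s' \<oplus> t = idm C M"
    and s't: "s' \<cdot> t = zero C M K" and ts: "t \<cdot> s = zero C K M"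
    using section_complementary_idempotent[OF assms] by blast
  obtain j where ker: "is_kernel C s' j" using kernel_exists s' unfolding hom_def by blast
  define L where "L = dom C j"
  have j: "j \<in> hom C L M" and s'j: "s' \<cdot> j = zero C L K"
    using is_kernel_hom[OF ker s'] unfolding L_def by auto
  have L: "L \<in> Obj C" using hom_obj[OF j] by blast
  obtain q where q: "q \<in> hom C M L" and jq: "j \<cdot> q = t"
    using ex1_implies_ex[OF is_kernel_factor[OF ker s' t s't]] unfolding L_def by blast
  have "j = (s \<cdot> s' \<oplus> t) \<cdot> j" using sum comp_id_left[OF j] by simp
  also have "\<dots> = t \<cdot> j"
    using comp_add_left[OF j comp_in_hom[OF s' s] t] comp_assoc[OF j s' s, symmetric] s'j
      comp_zero_right[OF s L] add_zero_left[OF comp_in_hom[OF j t]] by simp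
  finally have "j \<cdot> (q \<cdot> j) = j \<cdot> idm C L" using comp_assoc[OF j q j] jq comp_id_right[OF j] by simp
  then have qj: "q \<cdot> j = idm C L"
    using mono_cancel[OF kernel_mono[OF ker s'] j comp_in_hom[OF j q] id_in_hom[OF L]] by blast
  have "j \<cdot> (q \<cdot> s) = j \<cdot> zero C K L"
    using comp_assoc[OF s q j] jq ts comp_zero_right[OF j] hom_obj[OF s] by simp
  then have qs: "q \<cdot> s = zero C K L"
    using mono_cancel[OF kernel_mono[OF ker s'] j comp_in_hom[OF s q]] zero_in_hom L hom_obj[OF s] by blast
  show ?thesis
    using s s' j q inv qj qs s'j sum jq unfolding biproduct_def by blast
qed

lemma weak_duoI:
  assumes "\<And>K L s s' j q. biproduct M K L s s' j q \<Longrightarrow> fully_invariant C s"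
  shows "weak_duo C M"
  unfolding weak_duo_def
proof (intro allI impI, elim conjE)
  fix s assume "s \<in> Arr C" "cod C s = M" "is_section C s"
  then have s: "s \<in> hom C (dom C s) M" unfolding hom_def by simp
  then obtain s' where "s' \<in> hom C M (dom C s)" "s' \<cdot> s = idm C (dom C s)"
    using is_section_iff \<open>is_section C s\<close> by blast
  then obtain L j q where "biproduct M (dom C s) L s s' j q" using section_complement[OF s] by blast
  then show "fully_invariant C s" by (rule assms)
qed

lemma strongly_Rickart_imp_weak_duo:
  assumes summands: "\<forall>K. direct_summand C K M \<longrightarrow> iso_to_subobject C K N"
    and "strongly_Rickart C M N"
  shows "weak_duo C M"
proof (rule weak_duoI)
  fix K L s s' j q assume bp: "biproduct M K L s s' j q"
  have q: "q \<in> hom C M L" using bp unfolding biproduct_def by blast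
  have "direct_summand C L M" using biproduct_direct_summand[OF biproduct_swap[OF bp]] .
  then obtain S \<phi> m where \<phi>: "\<phi> \<in> hom C L S" "iso C \<phi>" and m: "m \<in> hom C S N" "mono C m"
    using summands unfolding iso_to_subobject_def by blast
  obtain \<psi> where "\<psi> \<in> hom C S L" "\<psi> \<cdot> \<phi> = idm C L" using iso_inverse[OF \<phi>(2,1)] by blast
  then have "mono C \<phi>" using section_mono[OF \<phi>(1)] by blast
  then have "is_kernel C (m \<cdot> \<phi> \<cdot> q) s"
    using is_kernel_comp_mono[OF is_kernel_comp_mono[OF biproduct_kernel[OF bp] q _ \<phi>(1)]
        comp_in_hom[OF q \<phi>(1)] m(2,1)] by blast
  moreover have "m \<cdot> \<phi> \<cdot> q \<in> hom C M N" using comp_in_hom[OF comp_in_hom[OF q \<phi>(1)] m(1)] .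
  ultimately show "fully_invariant C s"
    using \<open>strongly_Rickart C M N\<close> unfolding strongly_Rickart_def by blast
qed

lemma dual_strongly_Rickart_imp_weak_duo:
  assumes summands: "\<forall>K. direct_summand C K N \<longrightarrow> iso_to_factor C K M"
    and "dual_strongly_Rickart C M N"
  shows "weak_duo C N"
proof (rule weak_duoI)
  fix K L s s' j q assume bp: "biproduct N K L s s' j q"
  have s: "s \<in> hom C K N" and q: "q \<in> hom C N L" using bp unfolding biproduct_def by blast+
  have "direct_summand C K N" using biproduct_direct_summand[OF bp] .
  then obtain Q \<phi> e where \<phi>: "\<phi> \<in> hom C K Q" "iso C \<phi>" and e: "e \<in> hom C M Q" "epi C e"
    using summands unfolding iso_to_factor_def by blast
  obtain \<psi> where \<psi>: "\<psi> \<in> hom C Q K" "\<psi> \<cdot> \<phi> = idm C K" using iso_inverse[OF \<phi>(2,1)] by blast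
  have "is_cokernel C ((s \<cdot> \<psi>) \<cdot> e) q"
    using is_cokernel_comp_epi[OF is_cokernel_comp_epi[OF biproduct_cokernel[OF bp] s
        retraction_epi[OF \<psi>(1) \<phi>(1) \<psi>(2)] \<psi>(1)] comp_in_hom[OF \<psi>(1) s] e(2,1)] .
  moreover have "(s \<cdot> \<psi>) \<cdot> e \<in> hom C M N" using comp_in_hom[OF e(1) comp_in_hom[OF \<psi>(1) s]] .
  ultimately have "fully_coinvariant C q"
    using \<open>dual_strongly_Rickart C M N\<close> unfolding dual_strongly_Rickart_def by blast
  then show "fully_invariant C s"
    using fully_invariant_kernel_of_fully_coinvariant[OF biproduct_kernel[OF bp] q] by blast
qed

lemma dual_Rickart_weak_duo_imp_dual_strongly_Rickart:
  assumes "dual_Rickart C M N" and "weak_duo C N"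
  shows "dual_strongly_Rickart C M N"
  unfolding dual_strongly_Rickart_def
proof (intro ballI allI impI conjI)
  fix f c assume f: "f \<in> hom C M N" and coker: "is_cokernel C f c"
  show ret: "is_retraction C c" using assms(1) f coker unfolding dual_Rickart_def by blast
  have c: "c \<in> hom C N (cod C c)" using is_cokernel_hom[OF coker f] by blast
  obtain r where r: "r \<in> hom C (cod C c) N" and cr: "c \<cdot> r = idm C (cod C c)"
    using is_retraction_iff[OF c] ret by blast
  obtain L j q where "biproduct N (cod C c) L r c j q" using section_complement[OF r c cr] by blast
  then have bp: "biproduct N L (cod C c) j q r c" by (rule biproduct_swap)
  then have j: "j \<in> hom C L N" and "q \<in> hom C N L" and "q \<cdot> j = idm C L"
    unfolding biproduct_def by simp_all
  then have "is_section C j" using is_section_iff[OF j] by blast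
  then have "fully_invariant C j"
    using \<open>weak_duo C N\<close> j unfolding weak_duo_def hom_def by blast
  then show "fully_coinvariant C c"
    using fully_coinvariant_cokernel_of_fully_invariant[OF biproduct_cokernel[OF bp] j] by blast
qed

end

lemma strongly_Rickart_imp_Rickart: "strongly_Rickart C M N \<Longrightarrow> Rickart C M N"
  unfolding strongly_Rickart_def Rickart_def by blast

lemma dual_strongly_Rickart_imp_dual_Rickart: "dual_strongly_Rickart C M N \<Longrightarrow> dual_Rickart C M N"
  unfolding dual_strongly_Rickart_def dual_Rickart_def by blast

lemma Rickart_weak_duo_imp_strongly_Rickart:
  assumes "Rickart C M N" and "weak_duo C M"
  shows "strongly_Rickart C M N"
  unfolding strongly_Rickart_def
proof (intro ballI allI impI conjI)
  fix f k assume f: "f \<in> hom C M N" and ker: "is_kernel C f k"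
  show "is_section C k" using assms(1) f ker unfolding Rickart_def by blast
  moreover have "k \<in> Arr C \<and> cod C k = M" using ker f unfolding is_kernel_def hom_def by (elim conjE) simp
  ultimately show "fully_invariant C k" using assms(2) unfolding weak_duo_def by blast
qed

theorem proposition2p9:
  fixes C :: "('o, 'm) cat" and M N :: 'o
  assumes "abelian_category C" and "M \<in> Obj C" and "N \<in> Obj C"
  shows "((\<forall>K. direct_summand C K M \<longrightarrow> iso_to_subobject C K N) \<longrightarrow>
            (strongly_Rickart C M N \<longleftrightarrow> Rickart C M N \<and> weak_duo C M)) \<and>
         ((\<forall>K. direct_summand C K N \<longrightarrow> iso_to_factor C K M) \<longrightarrow>
            (dual_strongly_Rickart C M N \<longleftrightarrow> dual_Rickart C M N \<and> weak_duo C N))"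
proof -
  interpret is_abelian C by unfold_locales (fact assms(1))
  show ?thesis
  proof (intro conjI impI; rule iffI)
    assume "\<forall>K. direct_summand C K M \<longrightarrow> iso_to_subobject C K N" and "strongly_Rickart C M N"
    then show "Rickart C M N \<and> weak_duo C M"
      by (simp add: strongly_Rickart_imp_Rickart strongly_Rickart_imp_weak_duo)
  next
    assume "Rickart C M N \<and> weak_duo C M"
    then show "strongly_Rickart C M N" by (simp add: Rickart_weak_duo_imp_strongly_Rickart)
  next
    assume "\<forall>K. direct_summand C K N \<longrightarrow> iso_to_factor C K M" and "dual_strongly_Rickart C M N"
    then show "dual_Rickart C M N \<and> weak_duo C N"
      by (simp add: dual_strongly_Rickart_imp_dual_Rickart dual_strongly_Rickart_imp_weak_duo)
  next
    assume "dual_Rickart C M N \<and> weak_duo C N"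
    then show "dual_strongly_Rickart C M N" by (simp add: dual_Rickart_weak_duo_imp_dual_strongly_Rickart)
  qed
qed

end
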